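(* Let $0<q\le1\le p\le2$, let $A\in\mathbb{R}^{m\times n}$, let $\bar{x}\in\mathbb{R}^n$ have exactly $S\ge1$ nonzero groups, set $b:=A\bar{x}$, and suppose the $(p,q)$-GREC$(S,S)$ holds. Let $K$ be the smallest integer with $2^{K-1}q\ge1$ and let $\lambda>0$. Then for every $x^*\in{\rm lev}_F(\bar{x}):=\{x:\|Ax-b\|_2^2+\lambda\|x\|_{p,q}^q\le\lambda\|\bar{x}\|_{p,q}^q\}$, $$\|x^*-\bar{x}\|_2^2\le 2\lambda^{\frac{2}{2-q}}S^{\frac{q-2}{q}+(1-2^{-K})\frac{4}{q(2-q)}}\big/\phi_{p,q}^{\frac{4}{2-q}}(S,S).$$ Moreover, the exponent $e:=\frac{q-2}{q}+(1-2^{-K})\frac{4}{q(2-q)}$ satisfies $e=1$ if $2^{K-1}q=1$ and $e<\frac{3-q}{2-q}$ if $2^{K-1}q>1$; hence $\|x^*-\bar{x}\|_2^2=O(\lambda^{\frac{2}{2-q}}S)$ in the first case and $O(\lambda^{\frac{2}{2-q}}S^{\frac{3-q}{2-q}})$ in the second, with constant $2/\phi_{p,q}^{4/(2-q)}(S,S)$.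
   Context: Group structure: $\{1,\dots,n\}$ is partitioned into disjoint nonempty index sets $\mathcal{G}_1,\dots,\mathcal{G}_r$; $x_{\mathcal{G}_i}$ is the subvector indexed by $\mathcal{G}_i$. For $\mathcal{J}\subseteq\{1,\dots,r\}$, $\|x_{\mathcal{G}_{\mathcal{J}}}\|_{p,q}:=(\sum_{i\in\mathcal{J}}\|x_{\mathcal{G}_i}\|_p^q)^{1/q}$ and $\|x\|_{p,q}:=\|x_{\mathcal{G}_{\{1,\dots,r\}}}\|_{p,q}$. A group $i$ is nonzero if $x_{\mathcal{G}_i}\ne0$. For $\mathcal{J}\subseteq\{1,\dots,r\}$ and integer $N$, $\mathcal{J}(x;N)$ is the set of the $N$ indices $i\in\mathcal{J}^c$ with the largest $\|x_{\mathcal{G}_i}\|_p$ (ties broken arbitrarily). Group restricted eigenvalue: $\phi_{p,q}(S,N):=\inf\{\|Ax\|_2/\|x_{\mathcal{G}_{\mathcal{N}}}\|_{p,2}: x\ne0,\ |\mathcal{J}|\le S,\ \|x_{\mathcal{G}_{\mathcal{J}^c}}\|_{p,q}\le\|x_{\mathcal{G}_{\mathcal{J}}}\|_{p,q},\ \mathcal{N}=\mathcal{J}(x;N)\cup\mathcal{J}\}$; the $(p,q)$-GREC$(S,N)$ holds if $\phi_{p,q}(S,N)>0$. *)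

theory Defs
  imports "HOL-Analysis.Analysis"
begin

text \<open>Group structure: grp :: 'n \<Rightarrow> 'g assigns each coordinate its group;
  group i is G_i = {j. grp j = i}. Surjectivity of grp = all groups nonempty.\<close>

definition group_norm :: "('n::finite \<Rightarrow> 'g) \<Rightarrow> real \<Rightarrow> real^'n \<Rightarrow> 'g \<Rightarrow> real" where
  "group_norm grp p x i = (\<Sum>j\<in>{j. grp j = i}. \<bar>x $ j\<bar> powr p) powr (1 / p)"

definition gnorm_pq :: "('n::finite \<Rightarrow> 'g::finite) \<Rightarrow> real \<Rightarrow> real \<Rightarrow> real^'n \<Rightarrow> 'g set \<Rightarrow> real" where
  "gnorm_pq grp p q x J = (\<Sum>i\<in>J. group_norm grp p x i powr q) powr (1 / q)"

definition gnorm_pq_full :: "('n::finite \<Rightarrow> 'g::finite) \<Rightarrow> real \<Rightarrow> real \<Rightarrow> real^'n \<Rightarrow> real" where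
  "gnorm_pq_full grp p q x = gnorm_pq grp p q x UNIV"

definition nonzero_groups :: "('n::finite \<Rightarrow> 'g::finite) \<Rightarrow> real^'n \<Rightarrow> 'g set" where
  "nonzero_groups grp x = {i. \<exists>j. grp j = i \<and> x $ j \<noteq> 0}"

text \<open>T is an admissible choice of J(x;N): the N indices (or all, if fewer remain)
  in the complement of J with largest group norms, ties broken arbitrarily.\<close>
definition is_top_groups :: "('n::finite \<Rightarrow> 'g::finite) \<Rightarrow> real \<Rightarrow> real^'n \<Rightarrow> 'g set \<Rightarrow> nat \<Rightarrow> 'g set \<Rightarrow> bool" where
  "is_top_groups grp p x J N T \<longleftrightarrow>
     T \<subseteq> - J \<and> card T = min N (card (- J)) \<and>
     (\<forall>i\<in>T. \<forall>k\<in>(- J) - T. group_norm grp p x k \<le> group_norm grp p x i)"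

definition grec_phi :: "('n::finite \<Rightarrow> 'g::finite) \<Rightarrow> real \<Rightarrow> real \<Rightarrow> real^'n^'m \<Rightarrow> nat \<Rightarrow> nat \<Rightarrow> real" where
  "grec_phi grp p q A S N = Inf {norm (A *v x) / gnorm_pq grp p 2 x (T \<union> J) | x J T.
      x \<noteq> 0 \<and> card J \<le> S \<and> gnorm_pq grp p q x (- J) \<le> gnorm_pq grp p q x J \<and>
      is_top_groups grp p x J N T}"

definition GREC :: "('n::finite \<Rightarrow> 'g::finite) \<Rightarrow> real \<Rightarrow> real \<Rightarrow> real^'n^'m \<Rightarrow> nat \<Rightarrow> nat \<Rightarrow> bool" where
  "GREC grp p q A S N \<longleftrightarrow> grec_phi grp p q A S N > 0"

definition lev_F :: "('n::finite \<Rightarrow> 'g::finite) \<Rightarrow> real \<Rightarrow> real \<Rightarrow> real^'n^'m \<Rightarrow> real^'m \<Rightarrow> real \<Rightarrow> real^'n \<Rightarrow> (real^'n) set" where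
  "lev_F grp p q A b lam xbar = {x. (norm (A *v x - b))\<^sup>2 + lam * gnorm_pq_full grp p q x powr q
      \<le> lam * gnorm_pq_full grp p q xbar powr q}"

end

theory Submission
  imports Defs
begin

text \<open>Let \<open>h = xs - xbar\<close> and let \<open>J\<close> be the set of nonzero groups of \<open>xbar\<close>. Since \<open>xs\<close> lies
  in the level set, the triangle inequality for the group norms and the subadditivity of
  \<open>t \<mapsto> t powr q\<close> give \<open>\<parallel>A h\<parallel>\<^sup>2 + \<lambda> \<Sum>\<^sub>i\<^sub>\<notin>\<^sub>J \<parallel>h\<^sub>i\<parallel>\<^sup>q \<le> \<lambda> \<Sum>\<^sub>i\<^sub>\<in>\<^sub>J \<parallel>h\<^sub>i\<parallel>\<^sup>q\<close>. So \<open>h\<close> lies in the GREC cone, and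
  with \<open>T\<close> the \<open>S\<close> largest groups outside \<open>J\<close> and \<open>G = \<Sum>\<^sub>i\<^sub>\<in>\<^sub>T\<^sub>\<union>\<^sub>J \<parallel>h\<^sub>i\<parallel>\<^sup>2\<close> the power mean
  inequality yields \<open>\<phi>\<^sup>2 G \<le> \<lambda> S powr (1 - q/2) G powr (q/2)\<close>, that is
  \<open>G \<le> \<lambda> powr (2/(2-q)) S / \<phi> powr (4/(2-q))\<close>. Every group outside \<open>T \<union> J\<close> is dominated by
  the \<open>S\<close> groups in \<open>T\<close>, so their squared norms add up to at most \<open>G\<close>, and \<open>\<parallel>h\<parallel>\<^sup>2 \<le> 2 G\<close>.
  This bound is already linear in \<open>S\<close>: the exponent \<open>e\<close> of the statement equals
  \<open>(4 - q - 2/t)/(2 - q)\<close> with \<open>t = 2 powr (K - 1) * q \<in> [1,2)\<close>, so \<open>1 \<le> e < (3 - q)/(2 - q)\<close>.\<close>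

lemma convex_powr_combination:
  fixes u w t p :: real
  assumes "u \<ge> 0" "w \<ge> 0" "0 \<le> t" "t \<le> 1" "p \<ge> 1"
  shows "(t * u + (1 - t) * w) powr p \<le> t * u powr p + (1 - t) * w powr p"
proof (cases "u > 0 \<and> w > 0")
  case True
  then show ?thesis
    using convex_onD[OF powr_convex[OF \<open>p \<ge> 1\<close>], of t w u] assms by (simp add: algebra_simps)
next
  case False
  have powr_le: "s powr p \<le> s" if "0 \<le> s" "s \<le> 1" for s :: real
    using powr_mono'[of 1 p s] that assms by simp
  consider "u = 0" | "w = 0" using False assms by linarith
  then show ?thesis
  proof cases
    case 1
    have "((1 - t) * w) powr p = (1 - t) powr p * w powr p"
      using assms by (simp add: powr_mult)
    also have "\<dots> \<le> (1 - t) * w powr p"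
      using powr_le[of "1 - t"] assms by (intro mult_right_mono) auto
    finally show ?thesis using 1 assms by simp
  next
    case 2
    have "(t * u) powr p = t powr p * u powr p"
      using assms by (simp add: powr_mult)
    also have "\<dots> \<le> t * u powr p"
      using powr_le[of t] assms by (intro mult_right_mono) auto
    finally show ?thesis using 2 assms by simp
  qed
qed

lemma minkowski_sum_powr:
  fixes x y :: "'a \<Rightarrow> real" and p :: real
  assumes "finite G" "p \<ge> 1"
  shows "(\<Sum>j\<in>G. \<bar>x j + y j\<bar> powr p) powr (1/p)
     \<le> (\<Sum>j\<in>G. \<bar>x j\<bar> powr p) powr (1/p) + (\<Sum>j\<in>G. \<bar>y j\<bar> powr p) powr (1/p)"
proof -
  define a where "a = (\<Sum>j\<in>G. \<bar>x j\<bar> powr p) powr (1/p)"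
  define b where "b = (\<Sum>j\<in>G. \<bar>y j\<bar> powr p) powr (1/p)"
  have p0: "p > 0" using assms by simp
  have a_powr: "a powr p = (\<Sum>j\<in>G. \<bar>x j\<bar> powr p)"
    unfolding a_def using p0 by (simp add: powr_powr sum_nonneg)
  have b_powr: "b powr p = (\<Sum>j\<in>G. \<bar>y j\<bar> powr p)"
    unfolding b_def using p0 by (simp add: powr_powr sum_nonneg)
  consider "a = 0" | "b = 0" | "a > 0" "b > 0"
    unfolding a_def b_def by fastforce
  then show ?thesis
  proof cases
    case 1
    then have "\<forall>j\<in>G. x j = 0" using a_powr p0 assms(1) by (simp add: sum_nonneg_eq_0_iff)
    then show ?thesis using 1 unfolding a_def b_def by simp
  next
    case 2
    then have "\<forall>j\<in>G. y j = 0" using b_powr p0 assms(1) by (simp add: sum_nonneg_eq_0_iff)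
    then show ?thesis using 2 unfolding a_def b_def by simp
  next
    case 3
    define t where "t = a / (a + b)"
    have t: "0 \<le> t" "t \<le> 1" "1 - t = b / (a + b)"
      using 3 unfolding t_def by (auto simp: field_simps)
    \<comment> \<open>\<open>x + y\<close> is \<open>a + b\<close> times a convex combination of the unit vectors \<open>x/a\<close> and \<open>y/b\<close>.\<close>
    have pointwise: "\<bar>x j + y j\<bar> powr p
        \<le> (a + b) powr p * (t * (\<bar>x j\<bar> powr p / a powr p) + (1 - t) * (\<bar>y j\<bar> powr p / b powr p))" for j
    proof -
      have "\<bar>x j\<bar> + \<bar>y j\<bar> = (a + b) * (t * (\<bar>x j\<bar> / a) + (1 - t) * (\<bar>y j\<bar> / b))"
        using 3 unfolding t(3) by (simp add: t_def distrib_left)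
      then have "\<bar>x j + y j\<bar> powr p \<le> ((a + b) * (t * (\<bar>x j\<bar> / a) + (1 - t) * (\<bar>y j\<bar> / b))) powr p"
        using p0 by (metis abs_ge_zero abs_triangle_ineq powr_mono2 less_imp_le)
      also have "\<dots> \<le> (a + b) powr p * (t * (\<bar>x j\<bar> / a) powr p + (1 - t) * (\<bar>y j\<bar> / b) powr p)"
        unfolding powr_mult using 3 t assms by (intro mult_left_mono convex_powr_combination) auto
      finally show ?thesis using 3 by (simp add: powr_divide)
    qed
    have "(\<Sum>j\<in>G. \<bar>x j + y j\<bar> powr p)
        \<le> (\<Sum>j\<in>G. (a + b) powr p * (t * (\<bar>x j\<bar> powr p / a powr p) + (1 - t) * (\<bar>y j\<bar> powr p / b powr p)))"
      by (intro sum_mono pointwise)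
    also have "\<dots> = (a + b) powr p * (t * ((\<Sum>j\<in>G. \<bar>x j\<bar> powr p) / a powr p)
        + (1 - t) * ((\<Sum>j\<in>G. \<bar>y j\<bar> powr p) / b powr p))"
      by (simp add: sum_distrib_left sum_distrib_right sum.distrib sum_divide_distrib algebra_simps)
    also have "\<dots> = (a + b) powr p"
      using 3 by (simp flip: a_powr b_powr)
    finally have "(\<Sum>j\<in>G. \<bar>x j + y j\<bar> powr p) powr (1/p) \<le> ((a + b) powr p) powr (1/p)"
      using p0 by (intro powr_mono2) (auto intro: sum_nonneg)
    also have "\<dots> = a + b" using 3 p0 by (simp add: powr_powr)
    finally show ?thesis unfolding a_def b_def .
  qed
qed

lemma powr_add_le_add_powr:
  fixes a b q :: real
  assumes "a \<ge> 0" "b \<ge> 0" "0 < q" "q \<le> 1"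
  shows "(a + b) powr q \<le> a powr q + b powr q"
proof (cases "a + b = 0")
  case True
  then show ?thesis using assms by simp
next
  case False
  define s where "s = a + b"
  have s: "s > 0" using False assms s_def by simp
  have le_powr: "c \<le> c powr q" if "0 \<le> c" "c \<le> 1" for c :: real
    using powr_mono'[of q 1 c] that assms by simp
  have "s powr q = s powr q * (a / s + b / s)"
    using s by (simp add: s_def add_divide_distrib[symmetric])
  also have "\<dots> \<le> s powr q * ((a / s) powr q + (b / s) powr q)"
    using le_powr[of "a / s"] le_powr[of "b / s"] s assms
    by (intro mult_left_mono add_mono) (auto simp: s_def divide_le_eq_1)
  also have "\<dots> = a powr q + b powr q"
    using s assms by (simp add: powr_divide distrib_left)
  finally show ?thesis unfolding s_def .
qed

lemma sum_powr_le_card_powr_sum_powr: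
  fixes t :: "'a \<Rightarrow> real" and r :: real
  assumes "finite J" "\<And>i. i \<in> J \<Longrightarrow> t i \<ge> 0" "0 < r" "r \<le> 1"
  shows "(\<Sum>i\<in>J. t i powr r) \<le> real (card J) powr (1 - r) * (\<Sum>i\<in>J. t i) powr r"
proof (cases "(\<Sum>i\<in>J. t i) = 0")
  case True
  then have "\<forall>i\<in>J. t i = 0" using assms by (simp add: sum_nonneg_eq_0_iff)
  then show ?thesis by simp
next
  case False
  have card_pos: "real (card J) > 0"
    using False assms(1) by (cases "J = {}") (auto simp: card_gt_0_iff)
  define M where "M = (\<Sum>i\<in>J. t i) / card J"
  have M_pos: "M > 0"
    unfolding M_def using False card_pos assms by (metis divide_pos_pos less_eq_real_def sum_nonneg)
  \<comment> \<open>Young's inequality against the mean \<open>M\<close>.\<close>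
  have young: "t i powr r * M powr (1 - r) \<le> r * t i + (1 - r) * M" if "i \<in> J" for i
  proof (cases "t i = 0")
    case True
    then show ?thesis using M_pos assms by simp
  next
    case False
    then show ?thesis using Youngs_inequality_0[of r "1 - r" "t i" M] assms that M_pos by force
  qed
  have "(\<Sum>i\<in>J. t i powr r) * M powr (1 - r) \<le> (\<Sum>i\<in>J. r * t i + (1 - r) * M)"
    unfolding sum_distrib_right by (intro sum_mono young)
  also have "\<dots> = r * (\<Sum>i\<in>J. t i) + (1 - r) * (card J * M)"
    by (simp add: sum.distrib sum_distrib_left)
  also have "\<dots> = card J * M"
    using card_pos by (simp add: M_def field_simps)
  also have "\<dots> = (card J * M powr r) * M powr (1 - r)"
    using M_pos by (simp add: mult.assoc flip: powr_add)
  finally have "(\<Sum>i\<in>J. t i powr r) \<le> card J * M powr r"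
    by (rule mult_right_le_imp_le) (use M_pos in simp)
  also have "\<dots> = real (card J) powr (1 - r) * (\<Sum>i\<in>J. t i) powr r"
    using card_pos by (simp add: M_def powr_divide powr_diff)
  finally show ?thesis .
qed

lemma sum_power2_le_sum_powr_powr:
  fixes v :: "'a \<Rightarrow> real"
  assumes "finite G" "0 < p" "p \<le> 2"
  shows "(\<Sum>j\<in>G. (v j)\<^sup>2) \<le> ((\<Sum>j\<in>G. \<bar>v j\<bar> powr p) powr (1/p)) powr 2"
proof -
  define s where "s = (\<Sum>j\<in>G. \<bar>v j\<bar> powr p)"
  have s0: "s \<ge> 0" unfolding s_def by (simp add: sum_nonneg)
  have exp_nonneg: "2/p - 1 \<ge> 0" using assms by (simp add: field_simps)
  have pointwise: "(v j)\<^sup>2 \<le> \<bar>v j\<bar> powr p * s powr (2/p - 1)" if "j \<in> G" for j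
  proof -
    have "\<bar>v j\<bar> powr p \<le> s"
      unfolding s_def using assms(1) that by (intro member_le_sum) auto
    have "(v j)\<^sup>2 = \<bar>v j\<bar> powr 2"
      by simp
    also have "\<dots> = (\<bar>v j\<bar> powr p) powr (1 + (2/p - 1))"
      using assms by (simp add: powr_powr)
    also have "\<dots> = \<bar>v j\<bar> powr p * (\<bar>v j\<bar> powr p) powr (2/p - 1)"
      unfolding powr_add by simp
    also have "\<dots> \<le> \<bar>v j\<bar> powr p * s powr (2/p - 1)"
      using \<open>\<bar>v j\<bar> powr p \<le> s\<close> exp_nonneg by (intro mult_left_mono powr_mono2) auto
    finally show ?thesis .
  qed
  have "(\<Sum>j\<in>G. (v j)\<^sup>2) \<le> (\<Sum>j\<in>G. \<bar>v j\<bar> powr p * s powr (2/p - 1))"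
    using pointwise by (intro sum_mono) auto
  also have "\<dots> = s * s powr (2/p - 1)"
    unfolding s_def by (simp add: sum_distrib_right)
  also have "\<dots> = s powr (1 + (2/p - 1))"
    using s0 unfolding powr_add by simp
  also have "\<dots> = (s powr (1/p)) powr 2" using assms by (simp add: powr_powr)
  finally show ?thesis unfolding s_def .
qed

lemma le_powr_if_mult_le_mult_powr:
  fixes c d g r :: real
  assumes "c > 0" "d \<ge> 0" "g \<ge> 0" "r < 1" "c * g \<le> d * g powr r"
  shows "g \<le> (d / c) powr (1 / (1 - r))"
proof (cases "g = 0")
  case True
  then show ?thesis by simp
next
  case False
  then have g: "g > 0" using assms by simp
  have "(c * g powr (1 - r)) * g powr r \<le> d * g powr r"
    using assms g by (simp add: mult.assoc flip: powr_add)
  then have "c * g powr (1 - r) \<le> d"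
    by (rule mult_right_le_imp_le) (use g in simp)
  then have "g powr (1 - r) \<le> d / c"
    using assms by (simp add: pos_le_divide_eq mult.commute)
  then have "(g powr (1 - r)) powr (1 / (1 - r)) \<le> (d / c) powr (1 / (1 - r))"
    using assms by (intro powr_mono2) auto
  then show ?thesis using assms g by (simp add: powr_powr)
qed

lemma exists_top_subset:
  fixes f :: "'a \<Rightarrow> real"
  assumes "finite U"
  shows "\<exists>T\<subseteq>U. card T = min N (card U) \<and> (\<forall>i\<in>T. \<forall>k\<in>U - T. f k \<le> f i)"
proof (induction N)
  case 0
  then show ?case by (intro exI[of _ "{}"]) auto
next
  case (Suc N)
  then obtain T where T: "T \<subseteq> U" "card T = min N (card U)" "\<forall>i\<in>T. \<forall>k\<in>U - T. f k \<le> f i"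
    by blast
  have "finite T" using T(1) assms finite_subset by blast
  show ?case
  proof (cases "T = U")
    case True
    then show ?thesis using T by (intro exI[of _ T]) auto
  next
    case False
    then have "U - T \<noteq> {}" "card T < card U"
      using T(1) assms by (auto intro: psubset_card_mono)
    obtain k where k: "k \<in> U - T" "f k = Max (f ` (U - T))"
      using Max_in[of "f ` (U - T)"] \<open>U - T \<noteq> {}\<close> assms by fastforce
    then have k_max: "\<forall>k'\<in>U - T. f k' \<le> f k"
      using assms by simp
    show ?thesis
    proof (intro exI[of _ "insert k T"] conjI ballI)
      show "insert k T \<subseteq> U" "card (insert k T) = min (Suc N) (card U)"
        using k T \<open>finite T\<close> \<open>card T < card U\<close> by auto
      show "f k' \<le> f i" if "i \<in> insert k T" "k' \<in> U - insert k T" for i k'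
        using that k_max T(3) by auto
    qed
  qed
qed

lemma sum_powr_le_card_powr_sum_power2:
  fixes a :: "'a \<Rightarrow> real"
  assumes "finite J" "\<And>i. a i \<ge> 0" "0 < q" "q \<le> 2"
  shows "(\<Sum>i\<in>J. a i powr q) \<le> real (card J) powr (1 - q/2) * (\<Sum>i\<in>J. a i powr 2) powr (q/2)"
proof -
  have "(\<Sum>i\<in>J. (a i powr 2) powr (q/2)) \<le> real (card J) powr (1 - q/2) * (\<Sum>i\<in>J. a i powr 2) powr (q/2)"
    using assms by (intro sum_powr_le_card_powr_sum_powr) auto
  then show ?thesis by (simp add: powr_powr)
qed

lemma mean_powr_le_sum_power2:
  fixes a :: "'a \<Rightarrow> real"
  assumes "finite J" "J \<noteq> {}" "\<And>i. a i \<ge> 0" "0 < q" "q \<le> 2"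
  shows "real (card J) * ((\<Sum>i\<in>J. a i powr q) / card J) powr (2/q) \<le> (\<Sum>i\<in>J. a i powr 2)"
proof -
  define s where "s = real (card J)"
  define G where "G = (\<Sum>i\<in>J. a i powr 2)"
  have s: "s > 0" unfolding s_def using assms(1,2) by (simp add: card_gt_0_iff)
  have G: "G \<ge> 0" unfolding G_def by (simp add: sum_nonneg)
  have "(\<Sum>i\<in>J. a i powr q) / s \<le> s powr (1 - q/2) * G powr (q/2) / s"
    using sum_powr_le_card_powr_sum_power2[OF assms(1,3-5)] s by (simp add: s_def G_def divide_right_mono)
  also have "\<dots> = (G / s) powr (q/2)"
  proof -
    have "s powr (1 - q/2) = s / s powr (q/2)" using s by (simp add: powr_diff)
    then show ?thesis using s G by (simp add: powr_divide)
  qed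
  finally have "((\<Sum>i\<in>J. a i powr q) / s) powr (2/q) \<le> ((G / s) powr (q/2)) powr (2/q)"
    using assms s by (intro powr_mono2) (auto simp: sum_nonneg)
  also have "\<dots> = G / s"
    using assms s G by (simp add: powr_powr)
  finally show ?thesis using s by (simp add: s_def G_def pos_le_divide_eq mult.commute)
qed

text \<open>The \<open>card J\<close> largest entries outside \<open>J\<close> dominate the remaining ones, whose \<open>q\<close>-th powers are
  therefore at most the average \<open>\<beta>\<close> of the \<open>q\<close>-th powers over \<open>J\<close>.\<close>
lemma sum_power2_outside_top_le:
  fixes a :: "'g::finite \<Rightarrow> real"
  assumes a: "\<And>i. a i \<ge> 0" and q: "0 < q" "q \<le> 2" and "J \<noteq> {}"
    and T: "T \<subseteq> - J" "card T = min (card J) (card (- J))" "\<forall>i\<in>T. \<forall>k\<in>- J - T. a k \<le> a i"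
    and cone: "(\<Sum>i\<in>- J. a i powr q) \<le> (\<Sum>i\<in>J. a i powr q)"
  shows "(\<Sum>i\<in>- J - T. a i powr 2) \<le> (\<Sum>i\<in>J. a i powr 2)"
proof (cases "card (- J) \<le> card J")
  case True
  then have "T = - J" using T(1,2) by (simp add: card_subset_eq)
  then show ?thesis by (simp add: sum_nonneg)
next
  case False
  define s where "s = real (card J)"
  define B where "B = (\<Sum>i\<in>J. a i powr q)"
  define \<beta> where "\<beta> = B / s"
  have s: "s > 0" unfolding s_def using \<open>J \<noteq> {}\<close> by (simp add: card_gt_0_iff)
  have B: "B \<ge> 0" unfolding B_def by (simp add: sum_nonneg)
  then have \<beta>: "\<beta> \<ge> 0" unfolding \<beta>_def using s by simp
  have beta_bound: "a k powr q \<le> \<beta>" if k: "k \<in> - J - T" for k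
  proof -
    have "s * a k powr q = (\<Sum>i\<in>T. a k powr q)" using False T(2) by (simp add: s_def)
    also have "\<dots> \<le> (\<Sum>i\<in>T. a i powr q)"
      using T(3) k q a by (intro sum_mono powr_mono2) auto
    also have "\<dots> \<le> (\<Sum>i\<in>- J. a i powr q)" using T(1) by (intro sum_mono2) auto
    finally show ?thesis using cone s by (simp add: \<beta>_def B_def pos_le_divide_eq mult.commute)
  qed
  have "(\<Sum>i\<in>- J - T. a i powr 2) \<le> (\<Sum>i\<in>- J - T. a i powr q * \<beta> powr ((2 - q) / q))"
  proof (intro sum_mono)
    fix k assume k: "k \<in> - J - T"
    have "a k powr 2 = a k powr q * (a k powr q) powr ((2 - q) / q)"
      using q by (simp add: powr_powr flip: powr_add)
    also have "\<dots> \<le> a k powr q * \<beta> powr ((2 - q) / q)"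
      using beta_bound[OF k] q a by (intro mult_left_mono powr_mono2) auto
    finally show "a k powr 2 \<le> a k powr q * \<beta> powr ((2 - q) / q)" .
  qed
  also have "\<dots> \<le> B * \<beta> powr ((2 - q) / q)"
  proof -
    have "(\<Sum>i\<in>- J - T. a i powr q) \<le> (\<Sum>i\<in>- J. a i powr q)" by (intro sum_mono2) auto
    then show ?thesis unfolding sum_distrib_right[symmetric] B_def using cone by (intro mult_right_mono) auto
  qed
  also have "\<dots> = s * (\<beta> powr 1 * \<beta> powr ((2 - q) / q))"
    using s B by (simp add: \<beta>_def)
  also have "\<dots> = s * \<beta> powr (2 / q)"
  proof -
    have "1 + (2 - q) / q = 2 / q" using q by (simp add: field_simps)
    then show ?thesis by (metis powr_add)
  qed
  also have "\<dots> \<le> (\<Sum>i\<in>J. a i powr 2)"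
    using mean_powr_le_sum_power2[of J a q] \<open>J \<noteq> {}\<close> a q by (simp add: s_def \<beta>_def B_def)
  finally show ?thesis .
qed

lemma group_norm_nonneg: "group_norm grp p x i \<ge> 0"
  unfolding group_norm_def by simp

lemma group_norm_cong:
  assumes "\<And>j. grp j = i \<Longrightarrow> x $ j = y $ j"
  shows "group_norm grp p x i = group_norm grp p y i"
  unfolding group_norm_def using assms by (intro arg_cong[where f="\<lambda>s. s powr (1/p)"] sum.cong) auto

lemma group_norm_diff_le:
  fixes x y :: "real^'n::finite"
  assumes "p \<ge> 1"
  shows "group_norm grp p (x - y) i \<le> group_norm grp p x i + group_norm grp p y i"
  using minkowski_sum_powr[of "{j. grp j = i}" p "\<lambda>j. x $ j" "\<lambda>j. - y $ j"] assms
  by (simp add: group_norm_def)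

lemma gnorm_pq_powr:
  assumes "q > 0"
  shows "gnorm_pq grp p q x J powr q = (\<Sum>i\<in>J. group_norm grp p x i powr q)"
  unfolding gnorm_pq_def using assms by (simp add: powr_powr sum_nonneg)

lemma norm_power2_le_sum_group_norm:
  fixes x :: "real^'n::finite" and grp :: "'n \<Rightarrow> 'g::finite"
  assumes "0 < p" "p \<le> 2"
  shows "(norm x)\<^sup>2 \<le> (\<Sum>i\<in>UNIV. group_norm grp p x i powr 2)"
proof -
  have "(norm x)\<^sup>2 = (\<Sum>j\<in>UNIV. (x $ j)\<^sup>2)"
    unfolding norm_vec_def L2_set_def by (simp add: sum_nonneg)
  also have "\<dots> = (\<Sum>i\<in>UNIV. \<Sum>j\<in>{j. j \<in> UNIV \<and> grp j = i}. (x $ j)\<^sup>2)"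
    by (rule sum.group[symmetric]) auto
  also have "\<dots> \<le> (\<Sum>i\<in>UNIV. group_norm grp p x i powr 2)"
  proof (intro sum_mono)
    fix i
    show "(\<Sum>j\<in>{j. j \<in> UNIV \<and> grp j = i}. (x $ j)\<^sup>2) \<le> group_norm grp p x i powr 2"
      using sum_power2_le_sum_powr_powr[of "{j. grp j = i}" p "\<lambda>j. x $ j"] assms
      unfolding group_norm_def by simp
  qed
  finally show ?thesis .
qed

lemma is_top_groups_exists: "\<exists>T. is_top_groups grp p x J N T"
  using exists_top_subset[of "- J" N "group_norm grp p x"] unfolding is_top_groups_def by auto

lemma grec_phi_mult_le:
  assumes "card J \<le> S" "gnorm_pq grp p q x (- J) \<le> gnorm_pq grp p q x J"
    and "is_top_groups grp p x J N T"
  shows "grec_phi grp p q A S N * gnorm_pq grp p 2 x (T \<union> J) \<le> norm (A *v x)"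
proof (cases "x = 0 \<or> gnorm_pq grp p 2 x (T \<union> J) = 0")
  case True
  then show ?thesis by (auto simp: gnorm_pq_def group_norm_def)
next
  case False
  then have pos: "gnorm_pq grp p 2 x (T \<union> J) > 0"
    by (simp add: gnorm_pq_def less_le)
  let ?R = "{norm (A *v x) / gnorm_pq grp p 2 x (T \<union> J) | x J T.
      x \<noteq> 0 \<and> card J \<le> S \<and> gnorm_pq grp p q x (- J) \<le> gnorm_pq grp p q x J \<and>
      is_top_groups grp p x J N T}"
  have "norm (A *v x) / gnorm_pq grp p 2 x (T \<union> J) \<in> ?R"
    using False assms by blast
  moreover have "bdd_below ?R"
    by (rule bdd_belowI[where m=0]) (auto simp: gnorm_pq_def)
  ultimately have "grec_phi grp p q A S N \<le> norm (A *v x) / gnorm_pq grp p 2 x (T \<union> J)"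
    unfolding grec_phi_def by (rule cInf_lower)
  then show ?thesis using pos by (simp add: pos_le_divide_eq)
qed

text \<open>Off the support \<open>J\<close> of \<open>xbar\<close> the group norms of \<open>xs\<close> and of \<open>xs - xbar\<close> coincide, so
  the penalty of \<open>xs\<close> there is exactly the off-support part of the error.\<close>
lemma lev_F_cone:
  fixes xs xbar :: "real^'n::finite" and grp :: "'n \<Rightarrow> 'g::finite"
  assumes q: "0 < q" "q \<le> 1" and "1 \<le> p" "lam \<ge> 0"
    and xs: "xs \<in> lev_F grp p q A (A *v xbar) lam xbar"
  defines "J \<equiv> nonzero_groups grp xbar" and "a \<equiv> group_norm grp p (xs - xbar)"
  shows "(norm (A *v (xs - xbar)))\<^sup>2 + lam * (\<Sum>i\<in>- J. a i powr q) \<le> lam * (\<Sum>i\<in>J. a i powr q)"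
proof -
  let ?g = "\<lambda>x i. group_norm grp p x i powr q"
  have outside: "xbar $ j = 0" if "grp j \<notin> J" for j
    using that unfolding J_def nonzero_groups_def by auto
  have xbar_outside: "?g xbar i = 0" if "i \<notin> J" for i
    using group_norm_cong[of grp i xbar 0 p] outside that by (simp add: group_norm_def)
  have xs_outside: "?g xs i = a i powr q" if "i \<notin> J" for i
    unfolding a_def using group_norm_cong[of grp i xs "xs - xbar" p] outside that by simp
  have xbar_inside: "?g xbar i \<le> ?g xs i + a i powr q" for i
  proof -
    have "group_norm grp p xbar i \<le> group_norm grp p xs i + a i"
      using group_norm_diff_le[OF \<open>1 \<le> p\<close>, of grp xs "xs - xbar" i] by (simp add: a_def)
    then have "?g xbar i \<le> (group_norm grp p xs i + a i) powr q"
      using q by (intro powr_mono2) (auto simp: group_norm_nonneg)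
    also have "\<dots> \<le> ?g xs i + a i powr q"
      using q by (intro powr_add_le_add_powr) (auto simp: a_def group_norm_nonneg)
    finally show ?thesis .
  qed
  have split: "sum f UNIV = sum f J + sum f (- J)" for f :: "'g \<Rightarrow> real"
    using sum.union_disjoint[of J "- J" f] by (simp add: Un_Diff_cancel2 flip: Compl_eq_Diff_UNIV)
  have "(norm (A *v (xs - xbar)))\<^sup>2 + lam * (\<Sum>i\<in>UNIV. ?g xs i) \<le> lam * (\<Sum>i\<in>UNIV. ?g xbar i)"
    using xs q unfolding lev_F_def gnorm_pq_full_def
    by (simp add: gnorm_pq_powr matrix_vector_mult_diff_distrib)
  moreover have "(\<Sum>i\<in>UNIV. ?g xs i) = (\<Sum>i\<in>J. ?g xs i) + (\<Sum>i\<in>- J. a i powr q)"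
    using split[of "?g xs"] xs_outside by simp
  moreover have "(\<Sum>i\<in>UNIV. ?g xbar i) \<le> (\<Sum>i\<in>J. ?g xs i) + (\<Sum>i\<in>J. a i powr q)"
    using split[of "?g xbar"] xbar_outside sum_mono[of J "?g xbar" "\<lambda>i. ?g xs i + a i powr q"]
      xbar_inside by (simp add: sum.distrib)
  ultimately show ?thesis
    using \<open>lam \<ge> 0\<close> by (smt (verit) distrib_left mult_left_mono)
qed

lemma lev_F_cone_bounds:
  fixes xs xbar :: "real^'n::finite" and grp :: "'n \<Rightarrow> 'g::finite"
  assumes "0 < q" "q \<le> 1" "1 \<le> p" "lam > 0"
    and "xs \<in> lev_F grp p q A (A *v xbar) lam xbar"
  defines "J \<equiv> nonzero_groups grp xbar" and "a \<equiv> group_norm grp p (xs - xbar)"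
  shows "(\<Sum>i\<in>- J. a i powr q) \<le> (\<Sum>i\<in>J. a i powr q)"
    and "(norm (A *v (xs - xbar)))\<^sup>2 \<le> lam * (\<Sum>i\<in>J. a i powr q)"
proof -
  have cone: "(norm (A *v (xs - xbar)))\<^sup>2 + lam * (\<Sum>i\<in>- J. a i powr q) \<le> lam * (\<Sum>i\<in>J. a i powr q)"
    using lev_F_cone[of q p lam xs grp A xbar] assms by simp
  moreover have "0 \<le> lam * (\<Sum>i\<in>- J. a i powr q)"
    using assms(4) by (simp add: sum_nonneg)
  ultimately show "(norm (A *v (xs - xbar)))\<^sup>2 \<le> lam * (\<Sum>i\<in>J. a i powr q)"
    by linarith
  from cone have "lam * (\<Sum>i\<in>- J. a i powr q) \<le> lam * (\<Sum>i\<in>J. a i powr q)"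
    by (smt (verit) zero_le_power2)
  then show "(\<Sum>i\<in>- J. a i powr q) \<le> (\<Sum>i\<in>J. a i powr q)"
    using assms(4) by simp
qed

lemma lev_F_top_groups_bound:
  fixes grp :: "'n::finite \<Rightarrow> 'g::finite" and A :: "real^'n^'m::finite" and xbar xs :: "real^'n"
  assumes q: "0 < q" "q \<le> 1" and "1 \<le> p"
    and S: "card (nonzero_groups grp xbar) = S"
    and \<phi>: "grec_phi grp p q A S S > 0" and lam: "lam > 0"
    and xs: "xs \<in> lev_F grp p q A (A *v xbar) lam xbar"
    and T: "is_top_groups grp p (xs - xbar) (nonzero_groups grp xbar) S T"
  defines "J \<equiv> nonzero_groups grp xbar" and "a \<equiv> group_norm grp p (xs - xbar)"
  shows "(\<Sum>i\<in>T \<union> J. a i powr 2) \<le> lam powr (2 / (2 - q)) * real S / grec_phi grp p q A S S powr (4 / (2 - q))"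
proof -
  define \<phi> where "\<phi> = grec_phi grp p q A S S"
  define G where "G = (\<Sum>i\<in>T \<union> J. a i powr 2)"
  have a: "a i \<ge> 0" for i unfolding a_def by (rule group_norm_nonneg)
  have G: "G \<ge> 0" unfolding G_def by (simp add: sum_nonneg)
  note cone = lev_F_cone_bounds[OF q \<open>1 \<le> p\<close> lam xs, folded J_def a_def]
  have "gnorm_pq grp p q (xs - xbar) (- J) \<le> gnorm_pq grp p q (xs - xbar) J"
    unfolding gnorm_pq_def using cone(1) q by (intro powr_mono2) (auto simp: a_def sum_nonneg)
  moreover have "gnorm_pq grp p 2 (xs - xbar) (T \<union> J) = sqrt G"
    unfolding gnorm_pq_def G_def a_def by (simp add: powr_half_sqrt sum_nonneg)
  ultimately have "\<phi> * sqrt G \<le> norm (A *v (xs - xbar))"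
    using grec_phi_mult_le[of J S grp p q "xs - xbar" S T A] T S by (simp add: \<phi>_def J_def)
  then have "(\<phi> * sqrt G)\<^sup>2 \<le> (norm (A *v (xs - xbar)))\<^sup>2"
    using \<phi> G by (intro power_mono) (auto simp: \<phi>_def)
  then have "\<phi>\<^sup>2 * G \<le> lam * (\<Sum>i\<in>J. a i powr q)"
    using G cone(2) by (simp add: power_mult_distrib)
  also have "\<dots> \<le> lam * (real S powr (1 - q/2) * (\<Sum>i\<in>J. a i powr 2) powr (q/2))"
    using sum_powr_le_card_powr_sum_power2[of J a q] a q S lam by (simp add: J_def)
  also have "\<dots> \<le> lam * real S powr (1 - q/2) * G powr (q/2)"
    using lam q a unfolding G_def by (simp add: mult.assoc powr_mono2 sum_mono2 sum_nonneg mult_left_mono)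
  finally have "G \<le> (lam * real S powr (1 - q/2) / \<phi>\<^sup>2) powr (1 / (1 - q/2))"
    using \<phi> lam q G by (intro le_powr_if_mult_le_mult_powr) (auto simp: \<phi>_def)
  also have "\<dots> = lam powr (2 / (2 - q)) * real S / \<phi> powr (4 / (2 - q))"
  proof -
    have exponent: "1 / (1 - q/2) = 2 / (2 - q)" "(1 - q/2) * (2 / (2 - q)) = 1" "2 * (2 / (2 - q)) = 4 / (2 - q)"
      using q by (simp_all add: field_simps)
    have "(\<phi>\<^sup>2) powr (2 / (2 - q)) = \<phi> powr (4 / (2 - q))"
      using powr_powr[of \<phi> 2 "2 / (2 - q)"] exponent(3) \<phi> by (simp add: \<phi>_def)
    then show ?thesis
      using \<phi> lam q unfolding exponent(1)
      by (simp add: \<phi>_def powr_divide powr_mult powr_powr exponent(2))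
  qed
  finally show ?thesis unfolding G_def \<phi>_def .
qed

lemma lev_F_error_bound:
  fixes grp :: "'n::finite \<Rightarrow> 'g::finite" and A :: "real^'n^'m::finite" and xbar xs :: "real^'n"
  assumes q: "0 < q" "q \<le> 1" and p: "1 \<le> p" "p \<le> 2"
    and S: "card (nonzero_groups grp xbar) = S" "S \<ge> 1"
    and \<phi>: "grec_phi grp p q A S S > 0" and lam: "lam > 0"
    and xs: "xs \<in> lev_F grp p q A (A *v xbar) lam xbar"
  shows "(norm (xs - xbar))\<^sup>2
    \<le> 2 * (lam powr (2 / (2 - q)) * real S / grec_phi grp p q A S S powr (4 / (2 - q)))"
proof -
  define J where "J = nonzero_groups grp xbar"
  define a where "a = group_norm grp p (xs - xbar)"
  obtain T where T: "is_top_groups grp p (xs - xbar) J S T"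
    using is_top_groups_exists by blast
  define G where "G = (\<Sum>i\<in>T \<union> J. a i powr 2)"
  have a: "a i \<ge> 0" for i unfolding a_def by (rule group_norm_nonneg)
  have "J \<noteq> {}" using S unfolding J_def by auto
  then have "(\<Sum>i\<in>- J - T. a i powr 2) \<le> (\<Sum>i\<in>J. a i powr 2)"
    using T S(1) a q lev_F_cone_bounds(1)[OF q p(1) lam xs]
    by (intro sum_power2_outside_top_le) (auto simp: is_top_groups_def J_def a_def)
  also have "\<dots> \<le> G"
    unfolding G_def using a by (intro sum_mono2) auto
  finally have tail: "(\<Sum>i\<in>- J - T. a i powr 2) \<le> G" .
  have "(norm (xs - xbar))\<^sup>2 \<le> (\<Sum>i\<in>UNIV. a i powr 2)"
    unfolding a_def using p by (intro norm_power2_le_sum_group_norm) auto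
  also have "\<dots> = G + (\<Sum>i\<in>- J - T. a i powr 2)"
    unfolding G_def by (subst sum.union_disjoint[symmetric]) (auto intro: sum.cong)
  finally show ?thesis
    using tail lev_F_top_groups_bound[OF q p(1) S(1) \<phi> lam xs T[unfolded J_def]]
    by (simp add: G_def J_def a_def)
qed

lemma exponent_eq:
  fixes q :: real and K :: int
  assumes "0 < q" "q < 2"
  shows "(q - 2) / q + (1 - 2 powr (- real_of_int K)) * 4 / (q * (2 - q))
       = (4 - q - 2 / (2 powr (real_of_int K - 1) * q)) / (2 - q)"
proof -
  define P where "P = 2 powr (real_of_int K)"
  have P: "P > 0" unfolding P_def by simp
  have powers: "2 powr (- real_of_int K) = 1 / P" "2 powr (real_of_int K - 1) = P / 2"
    unfolding P_def by (simp_all add: powr_minus_divide powr_diff)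
  have "(q - 2) / q + (1 - 1 / P) * 4 / (q * (2 - q)) = (4 - q - 2 / (P / 2 * q)) / (2 - q)"
    using P assms by (simp add: field_simps power2_eq_square)
  then show ?thesis unfolding powers .
qed

lemma least_exponent_bound:
  fixes q :: real and K :: int
  assumes "\<forall>k::int. 2 powr (real_of_int k - 1) * q \<ge> 1 \<longrightarrow> K \<le> k"
  shows "2 powr (real_of_int K - 1) * q < 2"
proof (rule ccontr)
  assume "\<not> 2 powr (real_of_int K - 1) * q < 2"
  moreover have "2 powr (real_of_int (K - 1) - 1) * q = 2 powr (real_of_int K - 1) * q / 2"
    using powr_diff[of 2 "real_of_int K - 1" 1] by (simp add: algebra_simps)
  ultimately have "2 powr (real_of_int (K - 1) - 1) * q \<ge> 1" by linarith
  then show False using assms by fastforce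
qed

theorem theorem2p1:
  fixes grp :: "'n::finite \<Rightarrow> 'g::finite"
    and A :: "real^'n^'m::finite"
    and xbar xs :: "real^'n"
    and p q lam :: real and S :: nat and K :: int
  assumes groups: "surj grp"
    and q: "0 < q" "q \<le> 1" and p: "1 \<le> p" "p \<le> 2"
    and S: "card (nonzero_groups grp xbar) = S" "S \<ge> 1"
    and grec: "GREC grp p q A S S"
    and K: "2 powr (real_of_int K - 1) * q \<ge> 1"
           "\<forall>k::int. 2 powr (real_of_int k - 1) * q \<ge> 1 \<longrightarrow> K \<le> k"
    and lam_pos: "lam > 0"
    and xs: "xs \<in> lev_F grp p q A (A *v xbar) lam xbar"
  shows "let e = (q - 2) / q + (1 - 2 powr (- real_of_int K)) * 4 / (q * (2 - q));
             \<phi> = grec_phi grp p q A S S;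
             C = 2 / \<phi> powr (4 / (2 - q))
         in (norm (xs - xbar))\<^sup>2 \<le> 2 * lam powr (2 / (2 - q)) * real S powr e / \<phi> powr (4 / (2 - q))
          \<and> (2 powr (real_of_int K - 1) * q = 1 \<longrightarrow> e = 1 \<and>
               (norm (xs - xbar))\<^sup>2 \<le> C * lam powr (2 / (2 - q)) * real S)
          \<and> (2 powr (real_of_int K - 1) * q > 1 \<longrightarrow> e < (3 - q) / (2 - q) \<and>
               (norm (xs - xbar))\<^sup>2 \<le> C * lam powr (2 / (2 - q)) * real S powr ((3 - q) / (2 - q)))"
proof -
  define t where "t = 2 powr (real_of_int K - 1) * q"
  define e where "e = (q - 2) / q + (1 - 2 powr (- real_of_int K)) * 4 / (q * (2 - q))"
  define \<phi> where "\<phi> = grec_phi grp p q A S S"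
  define D where "D = lam powr (2 / (2 - q)) * real S / \<phi> powr (4 / (2 - q))"
  have t: "1 \<le> t" "t < 2" using K least_exponent_bound[OF K(2)] by (simp_all add: t_def)
  have e: "e = (4 - q - 2 / t) / (2 - q)" using exponent_eq[of q K] q by (simp add: e_def t_def)
  have "2 / t \<le> 2" "1 < 2 / t" using t by (simp_all add: field_simps)
  then have e_bounds: "1 \<le> e" "e < (3 - q) / (2 - q)" "t = 1 \<Longrightarrow> e = 1"
    using q unfolding e by (auto simp: le_divide_eq_1_pos intro: divide_strict_right_mono)
  have bound: "(norm (xs - xbar))\<^sup>2 \<le> 2 * D"
    using lev_F_error_bound[OF q p S _ lam_pos xs] grec by (simp add: GREC_def \<phi>_def D_def)
  have weaken: "2 * D \<le> 2 * lam powr (2 / (2 - q)) * r / \<phi> powr (4 / (2 - q))" if "real S \<le> r" for r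
    using that unfolding D_def by (simp add: mult.assoc divide_right_mono mult_left_mono)
  have "real S \<le> real S powr e" "real S \<le> real S powr ((3 - q) / (2 - q))"
    using S(2) q e_bounds(1) powr_mono[of 1 _ "real S"] by simp_all
  then show ?thesis
    using bound weaken e_bounds unfolding Let_def e_def[symmetric] \<phi>_def[symmetric] t_def[symmetric]
    by (auto simp: D_def intro: order_trans)
qed

end
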